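(* Consider the OCP and its QP reformulation as in the context, with symmetry group $\mathcal G$ and orbits $\mathcal O(\mathcal A)$ of active sets $\mathcal A\subseteq\mathcal Q$. If an active set $\mathcal{A}\subseteq\mathcal Q$ is non-primary, then every element of $\mathcal{D}(\mathcal{A})=\{\mathcal{A}\cup\hat{\mathcal{A}} : \hat{\mathcal{A}}\subseteq\{\max(\mathcal{A})+1,\dots,q\}\}$ is non-primary.
   Context: The OCP: $\min\ \|x(N)\|_P^2+\sum_{k=0}^{N-1}(\|x(k)\|_Q^2+\|u(k)\|_R^2)$ subject to $x(k+1)=Ax(k)+Bu(k)$, $u(k)\in\mathcal{U}$, $x(k)\in\mathcal{X}$ ($k=0,\dots,N-1$), $x(N)\in\mathcal{T}$, with $\mathcal{U},\mathcal{X},\mathcal{T}$ compact full-dimensional polytopes containing the origin in their interiors, each given by its irredundant halfspace representation with right-hand side 1. Eliminating states gives constraints $GU\le Ex(0)+1^q$ indexed by $\mathcal Q=\{1,\dots,q\}$. The OCP is symmetric to an invertible pair $(\Theta,\Omega)$ if $\Theta A=A\Theta$, $\Theta B=B\Omega$, $\Theta\mathcal{X}=\mathcal{X}$, $\Omega\mathcal{U}=\mathcal{U}$, $\Theta\mathcal{T}=\mathcal{T}$, $\Theta^TQ\Theta=Q$, $\Omega^TR\Omega=R$, $\Theta^TP\Theta=P$; $\mathcal G$ is the set of all such pairs (a group under pairwise multiplication). For $(\Theta,\Omega)\in\mathcal G$, $\pi^{(\Theta,\Omega)}$ is the permutation of $\mathcal Q$ mapping $i$ to the (assumed unique) $j$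 with $G_{\{i\}}=G_{\{j\}}(I^N\otimes\Omega)$, $E_{\{i\}}=E_{\{j\}}\Theta$; $\Pi^{(\Theta,\Omega)}(\mathcal A)=\{\pi^{(\Theta,\Omega)}(i):i\in\mathcal A\}$; the orbit of $\mathcal A\subseteq\mathcal Q$ is $\mathcal O(\mathcal A)=\{\Pi^{(\Theta,\Omega)}(\mathcal A):(\Theta,\Omega)\in\mathcal G\}$. The primary active set of an orbit $\mathcal O$ is the $\mathcal A\in\mathcal O$ such that $\min(\mathcal A\setminus\mathring{\mathcal A})<\min(\mathring{\mathcal A}\setminus\mathcal A)$ for all $\mathring{\mathcal A}\in\mathcal O\setminus\{\mathcal A\}$ (the lexicographically smallest element); an active set is non-primary if it is not the primary active set of its orbit. For $\mathcal A=\emptyset$, $\max(\mathcal A)$ is taken as $0$. *)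

theory Defs
  imports "HOL-Analysis.Analysis"
begin

primrec mpow :: "real^'n^'n \<Rightarrow> nat \<Rightarrow> real^'n^'n" where
  "mpow M 0 = mat 1"
| "mpow M (Suc k) = M ** mpow M k"

definition hpoly :: "(real^'n) list \<Rightarrow> (real^'n) set" where
  "hpoly H = {x. \<forall>h\<in>set H. h \<bullet> x \<le> 1}"

definition irredundant :: "(real^'n) list \<Rightarrow> bool" where
  "irredundant H \<longleftrightarrow> (\<forall>i<length H. hpoly (take i H @ drop (Suc i) H) \<noteq> hpoly H)"

definition good_polytope_rep :: "(real^'n) list \<Rightarrow> bool" where
  "good_polytope_rep H \<longleftrightarrow> compact (hpoly H) \<and> 0 \<in> interior (hpoly H) \<and> irredundant H"

(* Rows (cs) of the condensed constraints  G U <= E x(0) + 1.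
   A row is a pair (g, e): g k is the block of G multiplying u(k) (k < N),
   e is the corresponding row of E.
   Ordering: for k = 0..N-1 first the input constraints Hu u(k) <= 1, then
   the state constraints Hx x(k) <= 1; finally the terminal constraints Ht x(N) <= 1.
   With x(k) = A^k x0 + sum_{j<k} A^(k-1-j) B u(j):
     h . x(k) <= 1  <=>  sum_{j<k} (h v* (A^(k-1-j) B)) . u(j) <= -(h v* A^k) . x0 + 1. *)
definition input_rows :: "(real^'m) list \<Rightarrow> nat \<Rightarrow> ((nat \<Rightarrow> real^'m) \<times> (real^'n)) list" where
  "input_rows Hu k = map (\<lambda>h. (\<lambda>j. if j = k then h else 0, 0)) Hu"

definition state_rows :: "real^'n^'n \<Rightarrow> real^'m^'n \<Rightarrow> (real^'n) list \<Rightarrow> nat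
    \<Rightarrow> ((nat \<Rightarrow> real^'m) \<times> (real^'n)) list" where
  "state_rows A B H k = map (\<lambda>h. (\<lambda>j. if j < k then h v* (mpow A (k - 1 - j) ** B) else 0,
                                    - (h v* mpow A k))) H"

definition qp_rows :: "real^'n^'n \<Rightarrow> real^'m^'n \<Rightarrow> (real^'m) list \<Rightarrow> (real^'n) list
    \<Rightarrow> (real^'n) list \<Rightarrow> nat \<Rightarrow> ((nat \<Rightarrow> real^'m) \<times> (real^'n)) list" where
  "qp_rows A B Hu Hx Ht N =
     concat (map (\<lambda>k. input_rows Hu k @ state_rows A B Hx k) [0..<N]) @ state_rows A B Ht N"

(* the constraint index set Q = {1..q}; row i of G (resp. E) *)
definition Gr :: "((nat \<Rightarrow> real^'m) \<times> (real^'n)) list \<Rightarrow> nat \<Rightarrow> nat \<Rightarrow> real^'m" where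
  "Gr cs i = fst (cs ! (i - 1))"

definition Er :: "((nat \<Rightarrow> real^'m) \<times> (real^'n)) list \<Rightarrow> nat \<Rightarrow> real^'n" where
  "Er cs i = snd (cs ! (i - 1))"

definition sym_group :: "real^'n^'n \<Rightarrow> real^'m^'n \<Rightarrow> (real^'m) list \<Rightarrow> (real^'n) list
    \<Rightarrow> (real^'n) list \<Rightarrow> real^'n^'n \<Rightarrow> real^'m^'m \<Rightarrow> real^'n^'n
    \<Rightarrow> ((real^'n^'n) \<times> (real^'m^'m)) set" where
  "sym_group A B Hu Hx Ht Qm Rm Pm =
     {(\<Theta>, \<Omega>). invertible \<Theta> \<and> invertible \<Omega> \<and>
        \<Theta> ** A = A ** \<Theta> \<and> \<Theta> ** B = B ** \<Omega> \<and>
        (\<lambda>x. \<Theta> *v x) ` hpoly Hx = hpoly Hx \<and>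
        (\<lambda>u. \<Omega> *v u) ` hpoly Hu = hpoly Hu \<and>
        (\<lambda>x. \<Theta> *v x) ` hpoly Ht = hpoly Ht \<and>
        transpose \<Theta> ** Qm ** \<Theta> = Qm \<and>
        transpose \<Omega> ** Rm ** \<Omega> = Rm \<and>
        transpose \<Theta> ** Pm ** \<Theta> = Pm}"

definition row_map :: "((nat \<Rightarrow> real^'m) \<times> (real^'n)) list \<Rightarrow> nat
    \<Rightarrow> (real^'n^'n) \<times> (real^'m^'m) \<Rightarrow> nat \<Rightarrow> nat \<Rightarrow> bool" where
  "row_map cs N g i j \<longleftrightarrow>
     (\<forall>k<N. Gr cs i k = Gr cs j k v* snd g) \<and> Er cs i = Er cs j v* fst g"

definition perm_of :: "((nat \<Rightarrow> real^'m) \<times> (real^'n)) list \<Rightarrow> nat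
    \<Rightarrow> (real^'n^'n) \<times> (real^'m^'m) \<Rightarrow> nat \<Rightarrow> nat" where
  "perm_of cs N g i = (THE j. j \<in> {1..length cs} \<and> row_map cs N g i j)"

definition orbit :: "((nat \<Rightarrow> real^'m) \<times> (real^'n)) list \<Rightarrow> nat
    \<Rightarrow> ((real^'n^'n) \<times> (real^'m^'m)) set \<Rightarrow> nat set \<Rightarrow> nat set set" where
  "orbit cs N Grp S = {perm_of cs N g ` S | g. g \<in> Grp}"

definition primary :: "nat set set \<Rightarrow> nat set \<Rightarrow> bool" where
  "primary Orb S \<longleftrightarrow> S \<in> Orb \<and> (\<forall>S' \<in> Orb - {S}. Min (S - S') < Min (S' - S))"

definition maxz :: "nat set \<Rightarrow> nat" where
  "maxz S = (if S = {} then 0 else Max S)"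

definition Dset :: "nat \<Rightarrow> nat set \<Rightarrow> nat set set" where
  "Dset q S = {S \<union> T | T. T \<subseteq> {maxz S + 1..q}}"

end

theory Submission
  imports Defs
begin

text \<open>If a symmetry permutes an active set S to a set that is lexicographically not
  larger, it does the same to every extension of S by constraint indices above max S: the
  smallest index gained by S is still gained, and every index lost lies above it.\<close>

lemma card_eq_diff_nonempty:
  assumes "finite S" "finite S'" "card S' = card S" "S' \<noteq> S"
  shows "S - S' \<noteq> {}"
  using assms card_subset_eq by (metis Diff_eq_empty_iff)

lemma not_lex_smaller_upper_extension:
  fixes p :: "'a::linorder \<Rightarrow> 'a"
  assumes fin: "finite U" and inj: "inj_on p U" and sub: "S \<subseteq> U"
    and above: "\<And>s t. s \<in> S \<Longrightarrow> t \<in> U - S \<Longrightarrow> s < t"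
    and moved: "p ` S \<noteq> S"
    and not_less: "\<not> Min (S - p ` S) < Min (p ` S - S)"
  shows "p ` U \<noteq> U \<and> \<not> Min (U - p ` U) < Min (p ` U - U)"
proof -
  have finS: "finite S" using fin sub finite_subset by blast
  have card_pS: "card (p ` S) = card S"
    using card_image inj_on_subset[OF inj sub] by blast
  have card_pU: "card (p ` U) = card U" using card_image inj by blast
  define m where "m = Min (p ` S - S)"
  define m' where "m' = Min (S - p ` S)"
  have m_in: "m \<in> p ` S - S" unfolding m_def
    using card_eq_diff_nonempty[OF _ finS card_pS[symmetric]] moved finS by (intro Min_in) auto
  have m'_in: "m' \<in> S - p ` S" unfolding m'_def
    using card_eq_diff_nonempty[OF finS _ card_pS moved] finS by (intro Min_in) auto
  have "m \<noteq> m'" using m_in m'_in by blast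
  with not_less have m_less: "m < m'" unfolding m_def m'_def by simp
  have m_gained: "m \<in> p ` U - U"
    using m_in m'_in m_less above sub by (auto dest: above[of m'])
  then have moved_U: "p ` U \<noteq> U" by blast
  have lost_above: "m < x" if x: "x \<in> U - p ` U" for x
  proof (cases "x \<in> S")
    case True
    then have "x \<in> S - p ` S" using x sub by blast
    then have "m' \<le> x" unfolding m'_def using finS by simp
    then show ?thesis using m_less by simp
  next
    case False
    then show ?thesis using above[of m' x] m'_in x m_less by simp
  qed
  have "Min (U - p ` U) \<in> U - p ` U"
    using card_eq_diff_nonempty[OF fin _ card_pU moved_U] fin by (intro Min_in) auto
  then have "m < Min (U - p ` U)" by (rule lost_above)
  moreover have "Min (p ` U - U) \<le> m" using m_gained fin by (intro Min_le) auto
  ultimately show ?thesis using moved_U by simp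
qed

lemma mat_1_in_sym_group: "(mat 1, mat 1) \<in> sym_group A B Hu Hx Ht Qm Rm Pm"
  unfolding sym_group_def by (simp add: invertible_def)

lemma row_map_identity: "row_map cs N (mat 1, mat 1) i i"
  unfolding row_map_def by simp

lemma perm_of_row_map:
  assumes "\<exists>!j. j \<in> {1..length cs} \<and> row_map cs N g i j"
  shows "perm_of cs N g i \<in> {1..length cs} \<and> row_map cs N g i (perm_of cs N g i)"
  unfolding perm_of_def using theI'[OF assms] .

lemma perm_of_identity:
  assumes "\<exists>!j. j \<in> {1..length cs} \<and> row_map cs N (mat 1, mat 1) i j" and "i \<in> {1..length cs}"
  shows "perm_of cs N (mat 1, mat 1) i = i"
  using perm_of_row_map[OF assms(1)] assms row_map_identity by blast

text \<open>Two rows with the same image under a symmetry are both related to that image,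
  hence to each other by the identity; uniqueness for the identity makes them coincide.\<close>

lemma inj_on_perm_of:
  assumes unique_g: "\<forall>i\<in>{1..length cs}. \<exists>!j. j \<in> {1..length cs} \<and> row_map cs N g i j"
    and unique_id: "\<forall>i\<in>{1..length cs}. \<exists>!j. j \<in> {1..length cs} \<and> row_map cs N (mat 1, mat 1) i j"
  shows "inj_on (perm_of cs N g) {1..length cs}"
proof (rule inj_onI)
  fix i i'
  assume i: "i \<in> {1..length cs}" and i': "i' \<in> {1..length cs}"
    and same_image: "perm_of cs N g i = perm_of cs N g i'"
  have "row_map cs N (mat 1, mat 1) i i'"
    using perm_of_row_map[of cs N g i] perm_of_row_map[of cs N g i'] unique_g i i' same_image
    unfolding row_map_def by simp
  then show "i = i'" using unique_id row_map_identity i i' by blast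
qed

lemma self_in_orbit:
  assumes "(mat 1, mat 1) \<in> Grp"
    and "\<forall>i\<in>{1..length cs}. \<exists>!j. j \<in> {1..length cs} \<and> row_map cs N (mat 1, mat 1) i j"
    and "S \<subseteq> {1..length cs}"
  shows "S \<in> orbit cs N Grp S"
proof -
  have "perm_of cs N (mat 1, mat 1) s = s" if "s \<in> S" for s
    using perm_of_identity assms(2,3) that by blast
  then have "perm_of cs N (mat 1, mat 1) ` S = S" by simp
  then show ?thesis unfolding orbit_def using assms(1) by blast
qed

lemma Dset_above_max:
  assumes "U \<in> Dset q S" "S \<subseteq> {1..q}"
  obtains "U \<subseteq> {1..q}" "S \<subseteq> U" "\<And>s t. s \<in> S \<Longrightarrow> t \<in> U - S \<Longrightarrow> s < t"
proof
  obtain T where U: "U = S \<union> T" and T: "T \<subseteq> {maxz S + 1..q}"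
    using assms(1) unfolding Dset_def by blast
  have "finite S" using assms(2) finite_subset by blast
  then have "s \<le> maxz S" if "s \<in> S" for s
    using that unfolding maxz_def by auto
  then show "s < t" if "s \<in> S" "t \<in> U - S" for s t
    using that U T by fastforce
  show "U \<subseteq> {1..q}" "S \<subseteq> U" using U T assms(2) by auto
qed

theorem theorem4:
  fixes A :: "real^'n^'n" and B :: "real^'m^'n"
    and Qm Pm :: "real^'n^'n" and Rm :: "real^'m^'m"
    and Hu :: "(real^'m) list" and Hx Ht :: "(real^'n) list"
    and N :: nat and S :: "nat set"
  defines "cs \<equiv> qp_rows A B Hu Hx Ht N"
  defines "q \<equiv> length cs"
  defines "Grp \<equiv> sym_group A B Hu Hx Ht Qm Rm Pm"
  assumes polyU: "good_polytope_rep Hu"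
    and polyX: "good_polytope_rep Hx"
    and polyT: "good_polytope_rep Ht"
    and unique: "\<forall>g\<in>Grp. \<forall>i\<in>{1..q}. \<exists>!j. j \<in> {1..q} \<and> row_map cs N g i j"
    and S_sub: "S \<subseteq> {1..q}"
    and nonprim: "\<not> primary (orbit cs N Grp S) S"
  shows "\<forall>S'\<in>Dset q S. \<not> primary (orbit cs N Grp S') S'"
proof
  fix U assume U: "U \<in> Dset q S"
  have id: "(mat 1, mat 1) \<in> Grp" unfolding Grp_def by (rule mat_1_in_sym_group)
  have inj: "inj_on (perm_of cs N g) {1..q}" if "g \<in> Grp" for g
    using inj_on_perm_of unique that id unfolding q_def by blast
  have "S \<in> orbit cs N Grp S"
    using self_in_orbit[OF id] unique[rule_format, OF id] S_sub unfolding q_def by blast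
  then obtain g where g: "g \<in> Grp" and moved: "perm_of cs N g ` S \<noteq> S"
    and not_less: "\<not> Min (S - perm_of cs N g ` S) < Min (perm_of cs N g ` S - S)"
    using nonprim unfolding primary_def orbit_def by blast
  obtain U_sub: "U \<subseteq> {1..q}" and "S \<subseteq> U"
    and "\<And>s t. s \<in> S \<Longrightarrow> t \<in> U - S \<Longrightarrow> s < t"
    using Dset_above_max[OF U S_sub] by blast
  then have "perm_of cs N g ` U \<noteq> U
      \<and> \<not> Min (U - perm_of cs N g ` U) < Min (perm_of cs N g ` U - U)"
    using not_lex_smaller_upper_extension[OF finite_subset[OF U_sub] inj_on_subset[OF inj[OF g] U_sub]
        _ _ moved not_less] by simp
  moreover have "perm_of cs N g ` U \<in> orbit cs N Grp U" unfolding orbit_def using g by blast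
  ultimately show "\<not> primary (orbit cs N Grp U) U" unfolding primary_def by blast
qed

end
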